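(* Let $X$ be the class of continuous functions $f:[0,1]\to\mathbb{R}$ with $f(0),f(1)\in\mathbb{Z}$. Then each of the two families of operators $\widetilde{B}_n$, $n\in\mathbb{N}_+$, and $\widehat{B}_n$, $n\in\mathbb{N}_+$, uniformly asymptotically preserves convexity on $X$.
   Context: For $n\in\mathbb{N}_+$ and $f:[0,1]\to\mathbb{R}$, define $\widetilde{B}_n(f)(x):=\sum_{k=0}^n \left[f\left(\frac{k}{n}\right)\binom{n}{k}\right]x^k(1-x)^{n-k}$, where $[\alpha]$ is the largest integer $\le\alpha$, and $\widehat{B}_n(f)(x):=\sum_{k=0}^n \left\langle f\left(\frac{k}{n}\right)\binom{n}{k}\right\rangle x^k(1-x)^{n-k}$, where $\langle\alpha\rangle$ is the integer nearest to $\alpha$ (when $\alpha$ is a half-integer, $\langle\alpha\rangle$ may be either of the two neighbouring integers, chosen arbitrarily; the result holds for any such choice). Definition: a family of operators $L_n:X\to X$, $n\in\mathbb{N}_+$, on a class $X$ of functions defined on $I\subseteq\mathbb{R}$ uniformly asymptotically preserves convexity on $X$ if there exist $n_0\in\mathbb{N}_+$ and functions $\varepsilon_n,\eta_n:I\to\mathbb{R}$, $n\ge n_0$, such that: (i) $\varepsilon_n\to 0$ and $\eta_n\to 0$ uniformly on $I$ as $n\to\infty$; (ii) whenever $f\in X$ is convex on $I$, $L_n(f)+\varepsilon_n$ is convex on $I$ for all $n\ge n_0$; (iii) whenever $f\in X$ is concave on $I$, $L_n(f)+\eta_n$ is concave on $I$ for all $n\ge n_0$. *)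

theory Defs
  imports "HOL-Analysis.Analysis"
begin

definition Btilde :: "nat \<Rightarrow> (real \<Rightarrow> real) \<Rightarrow> real \<Rightarrow> real" where
  "Btilde n f x = (\<Sum>k\<le>n. real_of_int \<lfloor>f (real k / real n) * real (n choose k)\<rfloor>
                              * x ^ k * (1 - x) ^ (n - k))"

text \<open>A nearest-integer choice: rnd n k a is an integer nearest to a
  (at half-integers either neighbour may be chosen, possibly depending on n and k).\<close>
definition nearest_int_choice :: "(nat \<Rightarrow> nat \<Rightarrow> real \<Rightarrow> int) \<Rightarrow> bool" where
  "nearest_int_choice rnd \<longleftrightarrow>
     (\<forall>n k a. \<forall>m::int. \<bar>a - real_of_int (rnd n k a)\<bar> \<le> \<bar>a - real_of_int m\<bar>)"

definition Bhat :: "(nat \<Rightarrow> nat \<Rightarrow> real \<Rightarrow> int) \<Rightarrow> nat \<Rightarrow> (real \<Rightarrow> real) \<Rightarrow> real \<Rightarrow> real" where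
  "Bhat rnd n f x = (\<Sum>k\<le>n. real_of_int (rnd n k (f (real k / real n) * real (n choose k)))
                              * x ^ k * (1 - x) ^ (n - k))"

definition classX :: "(real \<Rightarrow> real) set" where
  "classX = {f. continuous_on {0..1} f \<and> f 0 \<in> \<int> \<and> f 1 \<in> \<int>}"

definition unif_asympt_pres_convexity ::
  "(nat \<Rightarrow> (real \<Rightarrow> real) \<Rightarrow> real \<Rightarrow> real) \<Rightarrow> (real \<Rightarrow> real) set \<Rightarrow> real set \<Rightarrow> bool" where
  "unif_asympt_pres_convexity L X I \<longleftrightarrow>
     (\<forall>n\<ge>1. \<forall>f\<in>X. L n f \<in> X) \<and>
     (\<exists>n0::nat. n0 \<ge> 1 \<and> (\<exists>\<epsilon> \<eta> :: nat \<Rightarrow> real \<Rightarrow> real.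
        uniform_limit I \<epsilon> (\<lambda>_. 0) sequentially \<and>
        uniform_limit I \<eta> (\<lambda>_. 0) sequentially \<and>
        (\<forall>f\<in>X. convex_on I f \<longrightarrow> (\<forall>n\<ge>n0. convex_on I (\<lambda>x. L n f x + \<epsilon> n x))) \<and>
        (\<forall>f\<in>X. concave_on I f \<longrightarrow> (\<forall>n\<ge>n0. concave_on I (\<lambda>x. L n f x + \<eta> n x)))))"

end

theory Submission
  imports Defs
begin

(*
  With b_k = c_k / (n choose k), an operator with integer coefficients c_k is the Bernstein
  polynomial with coefficients b_k, and rounding moves b_k away from f(k/n) by at most
  1 / (n choose k); at k = 0 and k = n it does not move it at all, because f(0) and f(1) are
  integers.  A Bernstein polynomial is convex on [0,1] as soon as its coefficients have
  nonnegative second differences (its second derivative is a nonnegative combination of them),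
  and the values f(k/n) of a convex f have this property.  So convexity is restored by adding
  the Bernstein polynomial of a fixed sequence whose second differences dominate those of the
  worst-case error.  Since 1 / (n choose k) <= (2/n) (2^-k + 2^-(n-k)) + 12/n^3 for n >= 6,
  such a sequence can be chosen of size O(1/n).  Concavity is the same argument applied to -f.
*)

definition bernstein_form :: "nat \<Rightarrow> (nat \<Rightarrow> real) \<Rightarrow> real \<Rightarrow> real" where
  "bernstein_form n b x = (\<Sum>k\<le>n. b k * Bernstein n k x)"

lemma bernstein_form_add:
  "bernstein_form n (\<lambda>k. b k + c k) = (\<lambda>x. bernstein_form n b x + bernstein_form n c x)"
  by (simp add: fun_eq_iff bernstein_form_def sum.distrib distrib_right)

lemma bernstein_form_uminus: "bernstein_form n (\<lambda>k. - b k) = (\<lambda>x. - bernstein_form n b x)"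
  by (simp add: fun_eq_iff bernstein_form_def sum_negf)

lemma sum_scaled_Bernstein_eq_bernstein_form:
  "(\<Sum>k\<le>n. c k * x ^ k * (1 - x) ^ (n - k)) = bernstein_form n (\<lambda>k. c k / real (n choose k)) x"
  unfolding bernstein_form_def Bernstein_def
proof (intro sum.cong refl)
  fix k
  assume "k \<in> {..n}"
  then have "real (n choose k) \<noteq> 0"
    by simp
  then show "c k * x ^ k * (1 - x) ^ (n - k)
      = c k / real (n choose k) * (real (n choose k) * x ^ k * (1 - x) ^ (n - k))"
    by simp
qed

lemma abs_bernstein_form_le:
  assumes "x \<in> {0..1}" and "\<And>k. k \<le> n \<Longrightarrow> \<bar>b k\<bar> \<le> M"
  shows "\<bar>bernstein_form n b x\<bar> \<le> M"
proof -
  have "\<bar>bernstein_form n b x\<bar> \<le> (\<Sum>k\<le>n. \<bar>b k * Bernstein n k x\<bar>)"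
    unfolding bernstein_form_def by (rule sum_abs)
  also have "\<dots> \<le> (\<Sum>k\<le>n. M * Bernstein n k x)"
    using assms by (intro sum_mono) (simp add: abs_mult Bernstein_nonneg mult_right_mono)
  also have "\<dots> = M"
    by (simp flip: sum_distrib_left)
  finally show ?thesis .
qed

lemma has_real_derivative_Bernstein:
  "(Bernstein (Suc m) k has_real_derivative
     real (Suc m) * ((if k = 0 then 0 else Bernstein m (k - 1) x) - Bernstein m k x)) (at x)"
proof (cases k)
  case 0
  show ?thesis
    unfolding 0 Bernstein_def[abs_def]
    by (rule derivative_eq_intros refl)+ (simp add: algebra_simps)
next
  case (Suc j)
  define C where "C = real (Suc m choose Suc j)"
  have up: "C * real (Suc j) = real (Suc m) * real (m choose j)"
    unfolding C_def by (metis Suc_times_binomial_eq of_nat_mult)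
  have down: "C * real (m - j) = real (Suc m) * real (m choose Suc j)"
    unfolding C_def by (metis binomial_absorb_comp diff_Suc_1 diff_Suc_Suc mult.commute of_nat_mult)
  have "((\<lambda>x. x ^ Suc j * (1 - x) ^ (m - j)) has_real_derivative
      real (Suc j) * x ^ j * (1 - x) ^ (m - j) - real (m - j) * x ^ Suc j * (1 - x) ^ (m - Suc j)) (at x)"
    by (rule derivative_eq_intros refl)+ (simp add: algebra_simps)
  then have "((\<lambda>x. C * (x ^ Suc j * (1 - x) ^ (m - j))) has_real_derivative
      C * real (Suc j) * (x ^ j * (1 - x) ^ (m - j))
      - C * real (m - j) * (x ^ Suc j * (1 - x) ^ (m - Suc j))) (at x)"
    by (rule DERIV_cmult[THEN DERIV_cong]) (simp add: algebra_simps)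
  moreover have "Bernstein (Suc m) (Suc j) = (\<lambda>x. C * (x ^ Suc j * (1 - x) ^ (m - j)))"
    by (simp add: fun_eq_iff Bernstein_def C_def del: binomial_Suc_Suc)
  ultimately show ?thesis
    unfolding up down Suc by (simp add: Bernstein_def algebra_simps)
qed

lemma has_real_derivative_bernstein_form:
  "(bernstein_form (Suc m) b has_real_derivative
     real (Suc m) * bernstein_form m (\<lambda>k. b (Suc k) - b k) x) (at x)"
proof -
  have "(bernstein_form (Suc m) b has_real_derivative
      real (Suc m) * ((\<Sum>k\<le>Suc m. b k * (if k = 0 then 0 else Bernstein m (k - 1) x))
                     - (\<Sum>k\<le>Suc m. b k * Bernstein m k x))) (at x)"
    unfolding bernstein_form_def[abs_def]
    by (rule derivative_eq_intros has_real_derivative_Bernstein refl)+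
       (simp add: sum_distrib_left sum_subtractf algebra_simps)
  also have "(\<Sum>k\<le>Suc m. b k * (if k = 0 then 0 else Bernstein m (k - 1) x))
      = (\<Sum>k\<le>m. b (Suc k) * Bernstein m k x)"
    by (subst sum.atMost_Suc_shift) simp
  also have "(\<Sum>k\<le>Suc m. b k * Bernstein m k x) = (\<Sum>k\<le>m. b k * Bernstein m k x)"
    by (simp add: Bernstein_def)
  finally show ?thesis
    by (simp add: bernstein_form_def[of m] sum_subtractf left_diff_distrib)
qed

lemma convex_on_bernstein_form:
  assumes "\<And>k. k + 2 \<le> n \<Longrightarrow> b k - 2 * b (k + 1) + b (k + 2) \<ge> 0"
  shows "convex_on {0..1} (bernstein_form n b)"
proof -
  consider "n = 0" | "n = 1" | m where "n = Suc (Suc m)"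
    by (metis One_nat_def not0_implies_Suc)
  then show ?thesis
  proof cases
    case 1
    then have "bernstein_form n b = (\<lambda>x. b 0)"
      by (simp add: fun_eq_iff bernstein_form_def Bernstein_def)
    then show ?thesis
      by (simp add: convex_on_const)
  next
    case 2
    then have "bernstein_form n b = (\<lambda>x. (b 1 - b 0) * x + b 0)"
      by (auto simp: bernstein_form_def Bernstein_def algebra_simps)
    then show ?thesis
      by (auto intro!: convex_on_linorderI simp: algebra_simps)
  next
    case (3 m)
    let ?d = "\<lambda>k. b (Suc k) - b k"
    show ?thesis unfolding 3
    proof (rule f''_ge0_imp_convex)
      fix x :: real assume x: "x \<in> {0..1}"
      show "(bernstein_form (Suc (Suc m)) b has_real_derivative
          real (Suc (Suc m)) * bernstein_form (Suc m) ?d x) (at x)"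
        by (rule has_real_derivative_bernstein_form)
      show "((\<lambda>x. real (Suc (Suc m)) * bernstein_form (Suc m) ?d x) has_real_derivative
          real (Suc (Suc m)) * (real (Suc m) * bernstein_form m (\<lambda>k. ?d (Suc k) - ?d k) x)) (at x)"
        by (intro DERIV_cmult has_real_derivative_bernstein_form)
      have "0 \<le> bernstein_form m (\<lambda>k. ?d (Suc k) - ?d k) x"
        unfolding bernstein_form_def
      proof (intro sum_nonneg mult_nonneg_nonneg)
        fix k assume "k \<in> {..m}"
        with assms[of k] 3 show "0 \<le> ?d (Suc k) - ?d k"
          by (simp add: numeral_2_eq_2)
        show "0 \<le> Bernstein m k x" using x by (simp add: Bernstein_nonneg)
      qed
      then show "0 \<le> real (Suc (Suc m)) * (real (Suc m) * bernstein_form m (\<lambda>k. ?d (Suc k) - ?d k) x)"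
        by simp
    qed simp
  qed
qed

definition coeff_error_bound :: "nat \<Rightarrow> nat \<Rightarrow> real" where
  "coeff_error_bound n k = 2 / real n * ((1/2) ^ k + (1/2) ^ (n - k)) + 12 / real n ^ 3"

(*
  The second differences of (1/2)^k and k (k - n) are (1/4) (1/2)^k and 2; matching the
  1,2,1-weighted sum of coeff_error_bound forces 18/4 = 2 (1 + 1 + 1/4) and 2 * 24 = 4 * 12.
*)
definition convexity_correction :: "nat \<Rightarrow> nat \<Rightarrow> real" where
  "convexity_correction n k =
     18 / real n * ((1/2) ^ k + (1/2) ^ (n - k)) + 24 / real n ^ 3 * real k * (real k - real n)"

lemma convexity_correction_second_diff:
  assumes "k + 2 \<le> n"
  shows "convexity_correction n k - 2 * convexity_correction n (k + 1) + convexity_correction n (k + 2)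
       = coeff_error_bound n k + 2 * coeff_error_bound n (k + 1) + coeff_error_bound n (k + 2)"
proof -
  define a c where "a = 2 / real n" and "c = 12 / real n ^ 3"
  have bound: "coeff_error_bound n j = a * ((1/2) ^ j + (1/2) ^ (n - j)) + c" for j
    by (simp add: coeff_error_bound_def a_def c_def)
  have correction: "convexity_correction n j
      = 9 * a * ((1/2) ^ j + (1/2) ^ (n - j)) + 2 * c * real j * (real j - real n)" for j
    by (simp add: convexity_correction_def a_def c_def)
  obtain m where "n = k + 2 + m"
    using assms le_Suc_ex by blast
  then have "n - k = m + 2" "n - (k + 1) = m + 1" "n - (k + 2) = m"
    by auto
  then show ?thesis
    unfolding bound correction by (simp add: power_add algebra_simps)
qed

lemma abs_convexity_correction_le:
  assumes "k \<le> n"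
  shows "\<bar>convexity_correction n k\<bar> \<le> 60 / real n"
proof -
  have "(1/2::real) ^ k + (1/2) ^ (n - k) \<le> 2"
    using power_le_one[of "1/2::real" k] power_le_one[of "1/2::real" "n - k"] by simp
  then have geometric: "\<bar>18 / real n * ((1/2) ^ k + (1/2) ^ (n - k))\<bar> \<le> 36 / real n"
    by (simp add: divide_simps)
  have "\<bar>real k * (real k - real n)\<bar> \<le> real n ^ 2"
    using assms by (simp add: abs_mult power2_eq_square mult_mono)
  then have quadratic: "\<bar>24 / real n ^ 3 * real k * (real k - real n)\<bar> \<le> 24 / real n"
    by (cases "n = 0") (auto simp: abs_mult divide_simps power3_eq_cube power2_eq_square mult.assoc)
  show ?thesis
    using geometric quadratic unfolding convexity_correction_def by linarith
qed

lemma uniform_limit_bernstein_form_convexity_correction: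
  "uniform_limit {0..1} (\<lambda>n. bernstein_form n (convexity_correction n)) (\<lambda>_. 0) sequentially"
proof (rule uniform_limitI)
  fix e :: real
  assume "0 < e"
  then have "\<forall>\<^sub>F n in sequentially. 60 / real n < e"
    by (rule order_tendstoD(2)[OF lim_const_over_n[where a = "60::real"]])
  then show "\<forall>\<^sub>F n in sequentially. \<forall>x\<in>{0..1}. dist (bernstein_form n (convexity_correction n) x) 0 < e"
    by eventually_elim
      (auto intro: le_less_trans abs_bernstein_form_le abs_convexity_correction_le)
qed

lemma real_binomial_three: "real (n choose 3) = real n * (real n - 1) * (real n - 2) / 6"
proof (cases "n \<ge> 3")
  case True
  then show ?thesis
    by (simp add: binomial_altdef_of_nat eval_nat_numeral prod.atLeast0_lessThan_Suc of_nat_diff)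
next
  case False
  then consider "n = 0" | "n = 1" | "n = 2" by linarith
  then show ?thesis by cases simp_all
qed

lemma inv_binomial_three_le: "n \<ge> 6 \<Longrightarrow> 1 / real (n choose 3) \<le> 12 / real n ^ 3"
proof -
  assume n: "n \<ge> 6"
  have "0 \<le> real n * (real n * (real n - 6) + 4)"
    using n by simp
  then have "real n ^ 3 \<le> 2 * (real n * (real n - 1) * (real n - 2))"
    by (simp add: power3_eq_cube algebra_simps)
  moreover have "0 < real n * (real n - 1) * (real n - 2)"
    using n by simp
  ultimately show ?thesis
    by (simp add: real_binomial_three divide_simps)
qed

lemma inv_binomial_le_coeff_error_bound_lower_half:
  assumes "n \<ge> 6" "1 \<le> k" "2 * k \<le> n"
  shows "1 / real (n choose k) \<le> coeff_error_bound n k"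
proof -
  have geometric: "2 / real n * (1/2) ^ k \<le> coeff_error_bound n k"
    and cubic: "12 / real n ^ 3 \<le> coeff_error_bound n k"
    by (simp_all add: coeff_error_bound_def distrib_left)
  consider "k = 1" | "k = 2" | "k \<ge> 3"
    using assms by linarith
  then show ?thesis
  proof cases
    case 1
    then show ?thesis
      using geometric by simp
  next
    case 2
    have "1 / real (n choose 2) = 2 / (real n * (real n - 1))"
      using assms by (simp add: choose_two real_of_nat_div of_nat_diff)
    also have "\<dots> \<le> 2 / real n * (1/2) ^ 2"
      using assms by (simp add: field_simps)
    finally show ?thesis
      using geometric 2 by simp
  next
    case 3
    have "1 / real (n choose k) \<le> 1 / real (n choose 3)"
      using assms 3 binomial_mono[of 3 k n] by (intro divide_left_mono) (auto simp: zero_less_binomial_iff)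
    also have "\<dots> \<le> 12 / real n ^ 3"
      by (rule inv_binomial_three_le[OF assms(1)])
    finally show ?thesis
      using cubic by simp
  qed
qed

lemma inv_binomial_le_coeff_error_bound:
  assumes "n \<ge> 6" "0 < k" "k < n"
  shows "1 / real (n choose k) \<le> coeff_error_bound n k"
proof (cases "2 * k \<le> n")
  case True
  with assms show ?thesis
    by (intro inv_binomial_le_coeff_error_bound_lower_half) auto
next
  case False
  with assms have "1 / real (n choose (n - k)) \<le> coeff_error_bound n (n - k)"
    by (intro inv_binomial_le_coeff_error_bound_lower_half) auto
  moreover have "n choose (n - k) = n choose k" "coeff_error_bound n (n - k) = coeff_error_bound n k"
    using assms by (simp_all add: binomial_symmetric[symmetric] coeff_error_bound_def)
  ultimately show ?thesis
    by simp
qed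

lemma abs_node_value_minus_rounded_le:
  assumes "n \<ge> 6" "k \<le> n"
    and close: "\<bar>f (real k / real n) * real (n choose k) - c\<bar> \<le> 1"
    and ends: "k = 0 \<Longrightarrow> c = f 0" "k = n \<Longrightarrow> c = f 1"
  shows "\<bar>f (real k / real n) - c / real (n choose k)\<bar> \<le> coeff_error_bound n k"
proof -
  consider "k = 0" | "k = n" | "0 < k" "k < n"
    using assms by linarith
  then show ?thesis
  proof cases
    case 1
    then show ?thesis
      using ends by (simp add: coeff_error_bound_def)
  next
    case 2
    then show ?thesis
      using ends assms by (simp add: coeff_error_bound_def)
  next
    case 3
    have C: "real (n choose k) > 0"
      using assms by simp
    have "\<bar>f (real k / real n) - c / real (n choose k)\<bar>
        = \<bar>f (real k / real n) * real (n choose k) - c\<bar> / real (n choose k)"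
      using C by (simp add: field_simps)
    also have "\<dots> \<le> 1 / real (n choose k)"
      using close C by (simp add: divide_right_mono)
    also have "\<dots> \<le> coeff_error_bound n k"
      using assms 3 by (intro inv_binomial_le_coeff_error_bound)
    finally show ?thesis .
  qed
qed

lemma convex_on_midpoint_nodes:
  assumes "convex_on {0..1} f" "k + 2 \<le> n"
  shows "f (real (k + 1) / real n) \<le> (f (real k / real n) + f (real (k + 2) / real n)) / 2"
proof -
  have "f ((1 - 1/2) *\<^sub>R (real k / real n) + (1/2) *\<^sub>R (real (k + 2) / real n))
      \<le> (1 - 1/2) * f (real k / real n) + (1/2) * f (real (k + 2) / real n)"
    using assms by (intro convex_onD) (auto simp: divide_simps)
  moreover have "(1 - 1/2) *\<^sub>R (real k / real n) + (1/2) *\<^sub>R (real (k + 2) / real n) = real (k + 1) / real n"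
    using assms by (simp add: field_simps)
  ultimately show ?thesis
    by simp
qed

lemma convex_on_corrected_bernstein_form:
  assumes "convex_on {0..1} f"
    and "\<And>k. k \<le> n \<Longrightarrow> \<bar>f (real k / real n) - b k\<bar> \<le> coeff_error_bound n k"
  shows "convex_on {0..1} (\<lambda>x. bernstein_form n b x + bernstein_form n (convexity_correction n) x)"
proof -
  have "convex_on {0..1} (bernstein_form n (\<lambda>k. b k + convexity_correction n k))"
  proof (rule convex_on_bernstein_form)
    fix k
    assume k: "k + 2 \<le> n"
    have "\<bar>f (real (k + i) / real n) - b (k + i)\<bar> \<le> coeff_error_bound n (k + i)" if "i \<le> 2" for i
      by (rule assms(2)) (use that k in simp)
    from this[of 0] this[of 1] this[of 2] convex_on_midpoint_nodes[OF assms(1) k]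
      convexity_correction_second_diff[OF k]
    show "0 \<le> b k + convexity_correction n k - 2 * (b (k + 1) + convexity_correction n (k + 1))
        + (b (k + 2) + convexity_correction n (k + 2))"
      by (simp add: abs_le_iff)
  qed
  then show ?thesis
    by (simp add: bernstein_form_add)
qed

lemma concave_on_corrected_bernstein_form:
  assumes "concave_on {0..1} f"
    and "\<And>k. k \<le> n \<Longrightarrow> \<bar>f (real k / real n) - b k\<bar> \<le> coeff_error_bound n k"
  shows "concave_on {0..1} (\<lambda>x. bernstein_form n b x - bernstein_form n (convexity_correction n) x)"
proof -
  have "convex_on {0..1} (\<lambda>x. bernstein_form n (\<lambda>k. - b k) x + bernstein_form n (convexity_correction n) x)"
    using assms by (intro convex_on_corrected_bernstein_form[of "\<lambda>x. - f x"])
      (auto simp: concave_on_def abs_minus_commute)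
  then show ?thesis
    by (simp add: concave_on_def bernstein_form_uminus)
qed

lemma sum_scaled_Bernstein_in_classX:
  assumes "c 0 \<in> \<int>" "c n \<in> \<int>"
  shows "(\<lambda>x. \<Sum>k\<le>n. c k * x ^ k * (1 - x) ^ (n - k)) \<in> classX"
proof -
  have "(\<Sum>k\<le>n. c k * 0 ^ k * (1 - 0) ^ (n - k)) = c 0"
    by (simp add: sum.atMost_shift)
  moreover have "(\<Sum>k\<le>n. c k * 1 ^ k * (1 - 1) ^ (n - k)) = c n"
    by (simp add: power_0_left flip: of_bool_def)
  ultimately show ?thesis
    using assms unfolding classX_def by (auto intro!: continuous_intros)
qed

lemma unif_asympt_pres_convexity_rounded_coeffs:
  fixes r :: "nat \<Rightarrow> nat \<Rightarrow> real \<Rightarrow> int"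
  assumes L: "\<And>n f x. L n f x = (\<Sum>k\<le>n. real_of_int (r n k (f (real k / real n) * real (n choose k)))
                                       * x ^ k * (1 - x) ^ (n - k))"
    and close: "\<And>n k a. \<bar>a - real_of_int (r n k a)\<bar> \<le> 1"
    and exact: "\<And>n k a. a \<in> \<int> \<Longrightarrow> real_of_int (r n k a) = a"
  shows "unif_asympt_pres_convexity L classX {0..1}"
proof -
  define b where "b n f = (\<lambda>k. real_of_int (r n k (f (real k / real n) * real (n choose k)))
                                    / real (n choose k))" for n f
  have L_bernstein: "L n f = bernstein_form n (b n f)" for n f
    by (simp add: fun_eq_iff L b_def sum_scaled_Bernstein_eq_bernstein_form)
  have X_ends: "f 0 \<in> \<int>" "f 1 \<in> \<int>" if "f \<in> classX" for f
    using that by (simp_all add: classX_def)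
  have in_X: "L n f \<in> classX" if "n \<ge> 1" "f \<in> classX" for n f
    using that X_ends[OF that(2)] unfolding L by (intro sum_scaled_Bernstein_in_classX) (simp_all add: exact)
  have error: "\<bar>f (real k / real n) - b n f k\<bar> \<le> coeff_error_bound n k"
    if "n \<ge> 6" "f \<in> classX" "k \<le> n" for n f k
    unfolding b_def using that X_ends[OF that(2)]
    by (intro abs_node_value_minus_rounded_le close) (auto simp: exact)
  show ?thesis
    unfolding unif_asympt_pres_convexity_def
  proof (intro conjI exI allI impI ballI)
    show "uniform_limit {0..1} (\<lambda>n. bernstein_form n (convexity_correction n)) (\<lambda>_. 0) sequentially"
      by (rule uniform_limit_bernstein_form_convexity_correction)
    then show "uniform_limit {0..1} (\<lambda>n x. - bernstein_form n (convexity_correction n) x) (\<lambda>_. 0) sequentially"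
      using uniform_limit_uminus by fastforce
    fix f n
    assume "f \<in> classX" "(6::nat) \<le> n"
    with error show "convex_on {0..1} f \<Longrightarrow>
        convex_on {0..1} (\<lambda>x. L n f x + bernstein_form n (convexity_correction n) x)"
      and "concave_on {0..1} f \<Longrightarrow>
        concave_on {0..1} (\<lambda>x. L n f x + - bernstein_form n (convexity_correction n) x)"
      unfolding L_bernstein
      by (auto intro: convex_on_corrected_bernstein_form concave_on_corrected_bernstein_form)
  qed (use in_X in auto)
qed

lemma nearest_int_choice_dist_le_one:
  assumes "nearest_int_choice rnd"
  shows "\<bar>a - real_of_int (rnd n k a)\<bar> \<le> 1"
proof -
  have "\<bar>a - real_of_int (rnd n k a)\<bar> \<le> \<bar>a - real_of_int \<lfloor>a\<rfloor>\<bar>"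
    using assms unfolding nearest_int_choice_def by blast
  also have "\<dots> \<le> 1"
    by linarith
  finally show ?thesis .
qed

lemma nearest_int_choice_of_int:
  assumes "nearest_int_choice rnd" "a \<in> \<int>"
  shows "real_of_int (rnd n k a) = a"
proof -
  from assms(2) obtain m where "a = real_of_int m"
    by (auto elim: Ints_cases)
  with assms(1) have "\<bar>a - real_of_int (rnd n k a)\<bar> \<le> 0"
    unfolding nearest_int_choice_def by (metis abs_zero cancel_comm_monoid_add_class.diff_cancel)
  then show ?thesis
    by simp
qed

theorem theorem1p6:
  shows "unif_asympt_pres_convexity Btilde classX {0..1} \<and>
         (\<forall>rnd. nearest_int_choice rnd \<longrightarrow>
            unif_asympt_pres_convexity (Bhat rnd) classX {0..1})"
proof (intro conjI allI impI)
  show "unif_asympt_pres_convexity Btilde classX {0..1}"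
    by (rule unif_asympt_pres_convexity_rounded_coeffs[where r = "\<lambda>_ _. floor"])
      (auto simp: Btilde_def elim: Ints_cases, linarith+)
next
  fix rnd
  assume "nearest_int_choice rnd"
  then show "unif_asympt_pres_convexity (Bhat rnd) classX {0..1}"
    by (intro unif_asympt_pres_convexity_rounded_coeffs[where r = rnd])
      (simp_all add: Bhat_def nearest_int_choice_dist_le_one nearest_int_choice_of_int)
qed

end
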